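(* Let $p_1,p_3,\beta,q_0,q_1\in\mathbb{R}$ with either $p_3=0$ or $\beta=1$, and let $q_2=5(q_1-3q_0)$. Then there is a polynomial $F$ in $u,u_x,\dots,u_{4x}$ such that for every smooth solution $u(x,t)$ of $$u_t=p_1(u^2)_x+p_3(uu_{xx}+\beta u_x^2)_x+q_0uu_{5x}+q_1u_xu_{4x}+q_2u_{2x}u_{3x}$$ one has $\partial_t(u^3)=\partial_x\big(F(u,u_x,\dots,u_{4x})\big)$. Consequently, for solutions decaying rapidly at $x\to\pm\infty$ together with their derivatives, $\int_{-\infty}^{\infty}u^3\,dx$ is independent of $t$.
   Context: Subscripts denote partial derivatives, $u_{kx}=\partial_x^k u$. *)

theory Defs
  imports "HOL-Analysis.Analysis"
begin

definition dx :: "(real \<Rightarrow> real \<Rightarrow> real) \<Rightarrow> nat \<Rightarrow> real \<Rightarrow> real \<Rightarrow> real" where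
  "dx u k x t = (deriv ^^ k) (\<lambda>y. u y t) x"

definition dt :: "(real \<Rightarrow> real \<Rightarrow> real) \<Rightarrow> real \<Rightarrow> real \<Rightarrow> real" where
  "dt u x t = deriv (\<lambda>s. u x s) t"

text \<open>Smooth (C-infinity) functions of (x,t) on the whole plane: continuous, both
  first partial derivatives exist everywhere, and are again smooth.\<close>
coinductive smooth2 :: "(real \<Rightarrow> real \<Rightarrow> real) \<Rightarrow> bool" where
  "\<lbrakk> continuous_on UNIV (\<lambda>z. f (fst z) (snd z));
     \<forall>x t. (\<lambda>y. f y t) differentiable (at x);
     \<forall>x t. (\<lambda>s. f x s) differentiable (at t);
     smooth2 (\<lambda>x t. deriv (\<lambda>y. f y t) x);
     smooth2 (\<lambda>x t. deriv (\<lambda>s. f x s) t) \<rbrakk> \<Longrightarrow> smooth2 f"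

definition poly5 :: "(real \<Rightarrow> real \<Rightarrow> real \<Rightarrow> real \<Rightarrow> real \<Rightarrow> real) \<Rightarrow> bool" where
  "poly5 F \<longleftrightarrow> (\<exists>c :: nat \<times> nat \<times> nat \<times> nat \<times> nat \<Rightarrow> real.
     finite {m. c m \<noteq> 0} \<and>
     (\<forall>v0 v1 v2 v3 v4. F v0 v1 v2 v3 v4 =
        (\<Sum>(a0, a1, a2, a3, a4) \<in> {m. c m \<noteq> 0}.
           c (a0, a1, a2, a3, a4) * v0 ^ a0 * v1 ^ a1 * v2 ^ a2 * v3 ^ a3 * v4 ^ a4)))"

definition solves_eq :: "real \<Rightarrow> real \<Rightarrow> real \<Rightarrow> real \<Rightarrow> real \<Rightarrow> real \<Rightarrow> (real \<Rightarrow> real \<Rightarrow> real) \<Rightarrow> bool" where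
  "solves_eq p1 p3 \<beta> q0 q1 q2 u \<longleftrightarrow> (\<forall>x t.
     dt u x t =
       p1 * deriv (\<lambda>y. (u y t)\<^sup>2) x
     + p3 * deriv (\<lambda>y. u y t * dx u 2 y t + \<beta> * (dx u 1 y t)\<^sup>2) x
     + q0 * u x t * dx u 5 x t + q1 * dx u 1 x t * dx u 4 x t
     + q2 * dx u 2 x t * dx u 3 x t)"

definition rapid_decay :: "(real \<Rightarrow> real \<Rightarrow> real) \<Rightarrow> bool" where
  "rapid_decay u \<longleftrightarrow> (\<forall>k n a b. \<exists>C. \<forall>x t. a \<le> t \<and> t \<le> b \<longrightarrow>
      \<bar>x\<bar> ^ n * \<bar>dx u k x t\<bar> \<le> C)"

end

theory Submission
  imports Defs "HOL-Probability.Sinc_Integral"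
begin

text \<open>
  Multiplying the equation by \<open>3u\<^sup>2\<close> gives \<open>(u\<^sup>3)\<^sub>t = 3u\<^sup>2u\<^sub>t\<close>, and each group of terms of
  \<open>3u\<^sup>2u\<^sub>t\<close> is an exact \<open>x\<close>-derivative of an explicit quartic polynomial in \<open>u, \<dots>, u\<^sub>4\<^sub>x\<close>:
  for the \<open>p\<^sub>3\<close>-term this needs \<open>\<beta> = 1\<close> (unless \<open>p\<^sub>3 = 0\<close>), and for the fifth-order terms it
  needs exactly \<open>q\<^sub>2 = 5(q\<^sub>1 - 3q\<^sub>0)\<close>. Integrating the resulting local conservation law over
  \<open>[-n, n] \<times> [t\<^sub>1, t\<^sub>2]\<close>, the change of \<open>\<integral>\<^sub>-\<^sub>n\<^sup>n u\<^sup>3\<close> is the flux through \<open>x = \<plusminus>n\<close>; since the flux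
  is quartic and \<open>x u\<close>, \<open>x u\<^sub>x\<close> are bounded, it is \<open>O(1/n)\<close>, and letting \<open>n \<rightarrow> \<infinity>\<close> gives
  conservation of \<open>\<integral> u\<^sup>3\<close>.
\<close>

lemma smooth2_continuous_on: "smooth2 f \<Longrightarrow> continuous_on UNIV (\<lambda>z. f (fst z) (snd z))"
  by (erule smooth2.cases) auto

lemma smooth2_differentiable_x: "smooth2 f \<Longrightarrow> (\<lambda>y. f y t) differentiable (at x)"
  by (erule smooth2.cases) auto

lemma smooth2_differentiable_t: "smooth2 f \<Longrightarrow> (\<lambda>s. f x s) differentiable (at t)"
  by (erule smooth2.cases) auto

lemma smooth2_deriv_x: "smooth2 f \<Longrightarrow> smooth2 (\<lambda>x t. deriv (\<lambda>y. f y t) x)"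
  by (erule smooth2.cases) auto

lemma smooth2_deriv_t: "smooth2 f \<Longrightarrow> smooth2 (\<lambda>x t. deriv (\<lambda>s. f x s) t)"
  by (erule smooth2.cases) auto

lemma dx_0 [simp]: "dx u 0 x t = u x t"
  by (simp add: dx_def)

lemma dx_Suc: "dx u (Suc k) x t = deriv (\<lambda>y. dx u k y t) x"
  by (simp add: dx_def)

lemma smooth2_dx: "smooth2 u \<Longrightarrow> smooth2 (dx u k)"
  by (induction k) (simp_all add: dx_def[abs_def] smooth2_deriv_x[of "dx u _", unfolded dx_def])

lemma smooth2_dt: "smooth2 u \<Longrightarrow> smooth2 (dt u)"
  using smooth2_deriv_t[of u] by (simp add: dt_def[abs_def])

lemma has_real_derivative_dx:
  "smooth2 u \<Longrightarrow> ((\<lambda>y. dx u k y t) has_real_derivative dx u (Suc k) x t) (at x)"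
  using smooth2_differentiable_x[OF smooth2_dx, of u k t x]
  by (simp add: dx_Suc DERIV_deriv_iff_real_differentiable)

lemma has_real_derivative_dt: "smooth2 u \<Longrightarrow> ((\<lambda>s. u x s) has_real_derivative dt u x t) (at t)"
  using smooth2_differentiable_t[of u x t]
  by (simp add: dt_def DERIV_deriv_iff_real_differentiable)

definition monomial5 ::
    "(nat \<times> nat \<times> nat \<times> nat \<times> nat \<Rightarrow> real) \<Rightarrow> real \<Rightarrow> real \<Rightarrow> real \<Rightarrow> real \<Rightarrow> real
     \<Rightarrow> nat \<times> nat \<times> nat \<times> nat \<times> nat \<Rightarrow> real" where
  "monomial5 c v0 v1 v2 v3 v4 = (\<lambda>(a0, a1, a2, a3, a4).
     c (a0, a1, a2, a3, a4) * v0 ^ a0 * v1 ^ a1 * v2 ^ a2 * v3 ^ a3 * v4 ^ a4)"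

lemma monomial5_eq_0: "c m = 0 \<Longrightarrow> monomial5 c v0 v1 v2 v3 v4 m = 0"
  by (cases m) (auto simp: monomial5_def)

lemma monomial5_add:
  "monomial5 (\<lambda>m. c m + d m) v0 v1 v2 v3 v4 m = monomial5 c v0 v1 v2 v3 v4 m + monomial5 d v0 v1 v2 v3 v4 m"
  by (cases m) (auto simp: monomial5_def algebra_simps)

lemma poly5_iff_monomial5:
  "poly5 F \<longleftrightarrow> (\<exists>c. finite {m. c m \<noteq> 0} \<and>
     (\<forall>v0 v1 v2 v3 v4. F v0 v1 v2 v3 v4 = sum (monomial5 c v0 v1 v2 v3 v4) {m. c m \<noteq> 0}))"
  unfolding poly5_def monomial5_def by simp

lemma sum_monomial5_superset:
  "finite T \<Longrightarrow> {m. c m \<noteq> 0} \<subseteq> T \<Longrightarrow>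
     sum (monomial5 c v0 v1 v2 v3 v4) {m. c m \<noteq> 0} = sum (monomial5 c v0 v1 v2 v3 v4) T"
  by (rule sum.mono_neutral_left) (auto intro: monomial5_eq_0)

lemma poly5_add:
  assumes "poly5 F" "poly5 G"
  shows "poly5 (\<lambda>v0 v1 v2 v3 v4. F v0 v1 v2 v3 v4 + G v0 v1 v2 v3 v4)"
proof -
  obtain c where c: "finite {m. c m \<noteq> 0}"
    "\<And>v0 v1 v2 v3 v4. F v0 v1 v2 v3 v4 = sum (monomial5 c v0 v1 v2 v3 v4) {m. c m \<noteq> 0}"
    using assms(1) unfolding poly5_iff_monomial5 by blast
  obtain d where d: "finite {m. d m \<noteq> 0}"
    "\<And>v0 v1 v2 v3 v4. G v0 v1 v2 v3 v4 = sum (monomial5 d v0 v1 v2 v3 v4) {m. d m \<noteq> 0}"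
    using assms(2) unfolding poly5_iff_monomial5 by blast
  define T where "T = {m. c m \<noteq> 0} \<union> {m. d m \<noteq> 0}"
  have T: "finite T" using c d by (simp add: T_def)
  have supp: "{m. c m + d m \<noteq> 0} \<subseteq> T" by (auto simp: T_def)
  show ?thesis unfolding poly5_iff_monomial5
  proof (intro exI conjI allI)
    show "finite {m. c m + d m \<noteq> 0}" using T supp finite_subset by blast
    fix v0 v1 v2 v3 v4
    have "F v0 v1 v2 v3 v4 + G v0 v1 v2 v3 v4 =
        sum (monomial5 c v0 v1 v2 v3 v4) T + sum (monomial5 d v0 v1 v2 v3 v4) T"
      using sum_monomial5_superset[OF T, of c] sum_monomial5_superset[OF T, of d] c d
      by (simp add: T_def)
    also have "\<dots> = sum (monomial5 (\<lambda>m. c m + d m) v0 v1 v2 v3 v4) T"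
      by (simp add: monomial5_add sum.distrib)
    also have "\<dots> = sum (monomial5 (\<lambda>m. c m + d m) v0 v1 v2 v3 v4) {m. c m + d m \<noteq> 0}"
      by (rule sum_monomial5_superset[OF T supp, symmetric])
    finally show "F v0 v1 v2 v3 v4 + G v0 v1 v2 v3 v4 =
        sum (monomial5 (\<lambda>m. c m + d m) v0 v1 v2 v3 v4) {m. c m + d m \<noteq> 0}" .
  qed
qed

lemma poly5_monomial: "poly5 (\<lambda>v0 v1 v2 v3 v4. a * v0 ^ a0 * v1 ^ a1 * v2 ^ a2 * v3 ^ a3 * v4 ^ a4)"
proof (cases "a = 0")
  case True
  then show ?thesis unfolding poly5_def by (intro exI[of _ "\<lambda>_. 0"]) simp
next
  case False
  let ?c = "\<lambda>m. if m = (a0, a1, a2, a3, a4) then a else 0"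
  have "{m. ?c m \<noteq> 0} = {(a0, a1, a2, a3, a4)}" using False by auto
  then show ?thesis unfolding poly5_def by (intro exI[of _ ?c]) auto
qed

text \<open>Written monomial by monomial, zero exponents included, so that \<open>poly5\<close> follows termwise.\<close>

definition cube_flux :: "real \<Rightarrow> real \<Rightarrow> real \<Rightarrow> real \<Rightarrow> real \<Rightarrow> real \<Rightarrow> real \<Rightarrow> real \<Rightarrow> real \<Rightarrow> real" where
  "cube_flux p1 p3 q0 q1 v0 v1 v2 v3 v4 =
      (3/2 * p1) * v0^4 * v1^0 * v2^0 * v3^0 * v4^0
    + (3 * p3) * v0^3 * v1^0 * v2^1 * v3^0 * v4^0
    + (3 * q0) * v0^3 * v1^0 * v2^0 * v3^0 * v4^1
    + (3*q1 - 9*q0) * v0^2 * v1^1 * v2^0 * v3^1 * v4^0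
    + (6*q1 - 18*q0) * v0^2 * v1^0 * v2^2 * v3^0 * v4^0
    + (18*q0 - 6*q1) * v0^1 * v1^2 * v2^1 * v3^0 * v4^0
    + (3/2*q1 - 9/2*q0) * v0^0 * v1^4 * v2^0 * v3^0 * v4^0"

lemma poly5_cube_flux: "poly5 (cube_flux p1 p3 q0 q1)"
  unfolding cube_flux_def[abs_def] by (intro poly5_add poly5_monomial)

lemma solves_eq_dt:
  assumes u: "smooth2 u" "solves_eq p1 p3 \<beta> q0 q1 q2 u" and \<beta>: "p3 = 0 \<or> \<beta> = 1"
  shows "dt u x t = 2 * p1 * u x t * dx u 1 x t + p3 * (u x t * dx u 3 x t + 3 * dx u 1 x t * dx u 2 x t)
     + q0 * u x t * dx u 5 x t + q1 * dx u 1 x t * dx u 4 x t + q2 * dx u 2 x t * dx u 3 x t"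
proof -
  note d = has_real_derivative_dx[OF u(1)]
  have d0: "((\<lambda>y. u y t) has_real_derivative dx u 1 x t) (at x)" for x
    using d[of 0 t x] by simp
  have "dt u x t = p1 * deriv (\<lambda>y. (u y t)\<^sup>2) x
     + p3 * deriv (\<lambda>y. u y t * dx u 2 y t + \<beta> * (dx u 1 y t)\<^sup>2) x
     + q0 * u x t * dx u 5 x t + q1 * dx u 1 x t * dx u 4 x t + q2 * dx u 2 x t * dx u 3 x t"
    using u(2) unfolding solves_eq_def by blast
  also have "deriv (\<lambda>y. (u y t)\<^sup>2) x = 2 * u x t * dx u 1 x t"
    by (rule DERIV_imp_deriv) (auto intro!: derivative_eq_intros d0)
  also have "deriv (\<lambda>y. u y t * dx u 2 y t + \<beta> * (dx u 1 y t)\<^sup>2) x =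
     dx u 1 x t * dx u 2 x t + u x t * dx u 3 x t + \<beta> * (2 * dx u 1 x t * dx u 2 x t)"
    by (rule DERIV_imp_deriv) (auto intro!: derivative_eq_intros d0 d simp: numeral_eq_Suc)
  also have "p3 * \<dots> = p3 * (u x t * dx u 3 x t + 3 * dx u 1 x t * dx u 2 x t)"
    using \<beta> by auto
  finally show ?thesis by (simp add: algebra_simps)
qed

lemma has_real_derivative_cube_flux:
  assumes u: "smooth2 u" "solves_eq p1 p3 \<beta> q0 q1 q2 u"
    and \<beta>: "p3 = 0 \<or> \<beta> = 1" and q2: "q2 = 5 * (q1 - 3 * q0)"
  shows "((\<lambda>y. cube_flux p1 p3 q0 q1 (u y t) (dx u 1 y t) (dx u 2 y t) (dx u 3 y t) (dx u 4 y t))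
     has_real_derivative 3 * (u x t)^2 * dt u x t) (at x)"
proof -
  note d = has_real_derivative_dx[OF u(1)]
  have d0: "((\<lambda>y. u y t) has_real_derivative dx u 1 x t) (at x)" for x
    using d[of 0 t x] by simp
  show ?thesis
    unfolding solves_eq_dt[OF u \<beta>] cube_flux_def
    by (auto intro!: derivative_eq_intros d0 d
        simp: q2 algebra_simps power2_eq_square power3_eq_cube numeral_eq_Suc)
qed

lemma tendsto_integral_symmetric_interval:
  fixes g :: "real \<Rightarrow> real"
  assumes "integrable lborel g"
  shows "(\<lambda>n. integral {-real n..real n} g) \<longlonglongrightarrow> (LBINT x. g x)"
proof -
  have union: "(\<Union>n. {-real n..real n}) = UNIV"
    by auto (meson abs_le_iff minus_le_iff real_arch_simple)
  have "incseq (\<lambda>n. {-real n..real n})"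
    by (auto simp: incseq_def)
  then have "(\<lambda>n. LINT x:{-real n..real n}|lborel. g x) \<longlonglongrightarrow> (LINT x:UNIV|lborel. g x)"
    using set_integral_cont_up[of "\<lambda>n. {-real n..real n}" lborel g] assms
    by (simp add: union set_integrable_def)
  moreover have "(LINT x:{-real n..real n}|lborel. g x) = integral {-real n..real n} g" for n
    using assms by (intro set_borel_integral_eq_integral(2))
      (use integrable_mult_indicator[of _ lborel g] in \<open>simp add: set_integrable_def\<close>)
  ultimately show ?thesis
    by (simp add: set_lebesgue_integral_def)
qed

lemma integrable_lborel_if_decay:
  fixes g :: "real \<Rightarrow> real"
  assumes "continuous_on UNIV g" and "\<And>x. \<bar>g x\<bar> \<le> A" and "\<And>x. x\<^sup>2 * \<bar>g x\<bar> \<le> B"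
  shows "integrable lborel g"
proof (rule Bochner_Integration.integrable_bound)
  show "integrable lborel (\<lambda>x. (A + B) * inverse (1 + x\<^sup>2))"
    using integrable_inverse_1_plus_square by (simp add: set_integrable_def)
  show "g \<in> borel_measurable lborel"
    using borel_measurable_continuous_onI[OF assms(1)] by simp
  show "AE x in lborel. norm (g x) \<le> norm ((A + B) * inverse (1 + x\<^sup>2))"
  proof (rule AE_I2)
    fix x :: real
    have "\<bar>g x\<bar> * (1 + x\<^sup>2) \<le> A + B"
      using assms(2,3)[of x] by (simp add: algebra_simps)
    then have "\<bar>g x\<bar> \<le> (A + B) * inverse (1 + x\<^sup>2)"
      by (simp add: field_simps add_pos_nonneg)
    then show "norm (g x) \<le> norm ((A + B) * inverse (1 + x\<^sup>2))"
      by simp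
  qed
qed

lemma has_real_derivative_integral_flux:
  fixes \<rho> \<Phi> E :: "real \<Rightarrow> real \<Rightarrow> real"
  assumes \<rho>_t: "\<And>y s. ((\<lambda>s. \<rho> y s) has_real_derivative E y s) (at s)"
    and \<Phi>_x: "\<And>y s. ((\<lambda>y. \<Phi> y s) has_real_derivative E y s) (at y)"
    and E_cont: "continuous_on UNIV (\<lambda>z. E (fst z) (snd z))"
    and \<rho>_int: "\<And>s. (\<lambda>y. \<rho> y s) integrable_on {a..b}"
    and "a \<le> b"
  shows "((\<lambda>s. integral {a..b} (\<lambda>y. \<rho> y s)) has_real_derivative \<Phi> b s - \<Phi> a s) (at s)"
proof -
  have "continuous_on UNIV (\<lambda>(s, y). E y s)"
    using continuous_on_compose2[OF E_cont continuous_on_swap]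
    by (simp add: split_beta)
  then have "((\<lambda>s. integral (cbox a b) (\<lambda>y. \<rho> y s)) has_real_derivative
      integral (cbox a b) (\<lambda>y. E y s)) (at s within UNIV)"
    by (intro leibniz_rule_field_derivative[where fx = "\<lambda>s y. E y s"])
      (auto intro: continuous_on_subset simp: \<rho>_t \<rho>_int)
  moreover have "((\<lambda>y. E y s) has_integral \<Phi> b s - \<Phi> a s) {a..b}"
    using \<Phi>_x \<open>a \<le> b\<close>
    by (intro fundamental_theorem_of_calculus)
      (auto intro: has_field_derivative_at_within simp: has_real_derivative_iff_has_vector_derivative[symmetric])
  ultimately show ?thesis
    by (simp add: integral_unique)
qed

lemma integral_conserved_if_flux_decays:
  fixes \<rho> \<Phi> E :: "real \<Rightarrow> real \<Rightarrow> real"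
  assumes \<rho>_t: "\<And>y s. ((\<lambda>s. \<rho> y s) has_real_derivative E y s) (at s)"
    and \<Phi>_x: "\<And>y s. ((\<lambda>y. \<Phi> y s) has_real_derivative E y s) (at y)"
    and E_cont: "continuous_on UNIV (\<lambda>z. E (fst z) (snd z))"
    and \<rho>_int: "\<And>s. integrable lborel (\<lambda>y. \<rho> y s)"
    and \<Phi>_decay: "\<And>y s. s \<in> {t1..t2} \<Longrightarrow> \<bar>y * \<Phi> y s\<bar> \<le> L"
    and "t1 \<le> t2"
  shows "(LBINT y. \<rho> y t1) = (LBINT y. \<rho> y t2)"
proof (cases "t1 = t2")
  case False
  with \<open>t1 \<le> t2\<close> have "t1 < t2" by simp
  define H where "H n s = integral {-real n..real n} (\<lambda>y. \<rho> y s)" for n s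
  have H_deriv: "((\<lambda>s. H n s) has_real_derivative \<Phi> (real n) s - \<Phi> (- real n) s) (at s)" for n s
    unfolding H_def
  proof (rule has_real_derivative_integral_flux[OF \<rho>_t \<Phi>_x E_cont])
    show "(\<lambda>y. \<rho> y s) integrable_on {- real n..real n}" for s
      using integrable_on_subcbox[OF integrable_on_lborel[OF \<rho>_int]] by simp
  qed simp
  have H_diff_bound: "\<bar>H n t2 - H n t1\<bar> \<le> (t2 - t1) * (2 * L) / real n" if "n \<ge> 1" for n
  proof -
    obtain z where z: "t1 < z" "z < t2"
      and H_diff: "H n t2 - H n t1 = (t2 - t1) * (\<Phi> (real n) z - \<Phi> (- real n) z)"
      using MVT2[OF \<open>t1 < t2\<close> H_deriv] by blast
    have "real n * \<bar>\<Phi> (real n) z - \<Phi> (- real n) z\<bar> \<le> \<bar>real n * \<Phi> (real n) z\<bar> + \<bar>- real n * \<Phi> (- real n) z\<bar>"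
      by (simp add: abs_mult abs_triangle_ineq4 mult_left_mono flip: distrib_left)
    also have "\<dots> \<le> 2 * L"
      using \<Phi>_decay[of z "real n"] \<Phi>_decay[of z "- real n"] z by simp
    finally have "(t2 - t1) * (real n * \<bar>\<Phi> (real n) z - \<Phi> (- real n) z\<bar>) \<le> (t2 - t1) * (2 * L)"
      using \<open>t1 < t2\<close> by (intro mult_left_mono) auto
    moreover have "\<bar>H n t2 - H n t1\<bar> = (t2 - t1) * \<bar>\<Phi> (real n) z - \<Phi> (- real n) z\<bar>"
      using \<open>t1 < t2\<close> by (simp add: H_diff abs_mult)
    ultimately show ?thesis
      using that by (simp add: le_divide_eq mult_ac)
  qed
  have "(\<lambda>n. H n t2 - H n t1) \<longlonglongrightarrow> 0"
  proof (rule Lim_null_comparison)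
    show "\<forall>\<^sub>F n in sequentially. norm (H n t2 - H n t1) \<le> (t2 - t1) * (2 * L) / real n"
      using H_diff_bound by (auto simp: eventually_sequentially)
  qed (rule lim_const_over_n)
  moreover have "(\<lambda>n. H n t2 - H n t1) \<longlonglongrightarrow> (LBINT y. \<rho> y t2) - (LBINT y. \<rho> y t1)"
    unfolding H_def by (intro tendsto_diff tendsto_integral_symmetric_interval \<rho>_int)
  ultimately show ?thesis
    using LIMSEQ_unique by fastforce
qed simp

lemma rapid_decay_uniform_bound:
  assumes "rapid_decay u"
  obtains C where "\<And>k x t. k \<le> K \<Longrightarrow> t \<in> {a..b} \<Longrightarrow> \<bar>x\<bar> ^ n * \<bar>dx u k x t\<bar> \<le> C"
proof -
  have "\<forall>k. \<exists>C. \<forall>x t. t \<in> {a..b} \<longrightarrow> \<bar>x\<bar> ^ n * \<bar>dx u k x t\<bar> \<le> C"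
    using assms unfolding rapid_decay_def by simp
  then obtain C where C: "\<And>k x t. t \<in> {a..b} \<Longrightarrow> \<bar>x\<bar> ^ n * \<bar>dx u k x t\<bar> \<le> C k"
    by metis
  have "\<bar>x\<bar> ^ n * \<bar>dx u k x t\<bar> \<le> (\<Sum>j\<le>K. \<bar>C j\<bar>)" if "k \<le> K" "t \<in> {a..b}" for k x t
  proof -
    have "\<bar>C k\<bar> \<le> (\<Sum>j\<le>K. \<bar>C j\<bar>)"
      using that by (intro member_le_sum) auto
    then show ?thesis
      using C[OF that(2), of x k] by linarith
  qed
  then show thesis by (rule that)
qed

lemma abs_weighted_quartic_le:
  fixes y c a b d e M D :: real
  assumes "\<bar>y * a\<bar> \<le> D" "\<bar>b\<bar> \<le> M" "\<bar>d\<bar> \<le> M" "\<bar>e\<bar> \<le> M"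
  shows "\<bar>y * (c * a * b * d * e)\<bar> \<le> \<bar>c\<bar> * D * M ^ 3"
proof -
  have "\<bar>y * (c * a * b * d * e)\<bar> = \<bar>c\<bar> * (\<bar>y * a\<bar> * (\<bar>b\<bar> * \<bar>d\<bar> * \<bar>e\<bar>))"
    by (simp add: abs_mult mult_ac)
  also have "\<dots> \<le> \<bar>c\<bar> * (D * (M * M * M))"
    using assms by (intro mult_left_mono mult_mono) auto
  finally show ?thesis
    by (simp add: power3_eq_cube mult_ac)
qed

lemma abs_weighted_cube_flux_le:
  assumes "\<bar>v0\<bar> \<le> M" "\<bar>v1\<bar> \<le> M" "\<bar>v2\<bar> \<le> M" "\<bar>v3\<bar> \<le> M" "\<bar>v4\<bar> \<le> M"
    and "\<bar>y * v0\<bar> \<le> D" "\<bar>y * v1\<bar> \<le> D"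
  shows "\<bar>y * cube_flux p1 p3 q0 q1 v0 v1 v2 v3 v4\<bar> \<le>
    (\<bar>3/2 * p1\<bar> + \<bar>3 * p3\<bar> + \<bar>3 * q0\<bar> + \<bar>3*q1 - 9*q0\<bar> + \<bar>6*q1 - 18*q0\<bar>
      + \<bar>18*q0 - 6*q1\<bar> + \<bar>3/2*q1 - 9/2*q0\<bar>) * D * M ^ 3"
proof -
  have flux: "y * cube_flux p1 p3 q0 q1 v0 v1 v2 v3 v4 =
      y * ((3/2 * p1) * v0 * v0 * v0 * v0) + y * ((3 * p3) * v0 * v0 * v0 * v2)
    + y * ((3 * q0) * v0 * v0 * v0 * v4) + y * ((3*q1 - 9*q0) * v0 * v0 * v1 * v3)
    + y * ((6*q1 - 18*q0) * v0 * v0 * v2 * v2) + y * ((18*q0 - 6*q1) * v0 * v1 * v1 * v2)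
    + y * ((3/2*q1 - 9/2*q0) * v1 * v1 * v1 * v1)"
    by (simp add: cube_flux_def algebra_simps power2_eq_square power3_eq_cube power4_eq_xxxx)
  note term_bounds =
    abs_weighted_quartic_le[OF assms(6) assms(1) assms(1) assms(1), of "3/2 * p1"]
    abs_weighted_quartic_le[OF assms(6) assms(1) assms(1) assms(3), of "3 * p3"]
    abs_weighted_quartic_le[OF assms(6) assms(1) assms(1) assms(5), of "3 * q0"]
    abs_weighted_quartic_le[OF assms(6) assms(1) assms(2) assms(4), of "3*q1 - 9*q0"]
    abs_weighted_quartic_le[OF assms(6) assms(1) assms(3) assms(3), of "6*q1 - 18*q0"]
    abs_weighted_quartic_le[OF assms(6) assms(2) assms(2) assms(3), of "18*q0 - 6*q1"]
    abs_weighted_quartic_le[OF assms(7) assms(2) assms(2) assms(2), of "3/2*q1 - 9/2*q0"]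
  show ?thesis
    unfolding flux distrib_right
    by (intro order_trans[OF abs_triangle_ineq] add_mono) (fact term_bounds)+
qed

lemma has_real_derivative_cube_t:
  "smooth2 u \<Longrightarrow> ((\<lambda>s. (u y s) ^ 3) has_real_derivative 3 * (u y s)\<^sup>2 * dt u y s) (at s)"
  by (auto intro!: derivative_eq_intros has_real_derivative_dt)

lemma cube_local_conservation_law:
  assumes u: "smooth2 u" "solves_eq p1 p3 \<beta> q0 q1 q2 u"
    and \<beta>: "p3 = 0 \<or> \<beta> = 1" and q2: "q2 = 5 * (q1 - 3 * q0)"
  shows "dt (\<lambda>y s. (u y s) ^ 3) x t =
    deriv (\<lambda>y. cube_flux p1 p3 q0 q1 (u y t) (dx u 1 y t) (dx u 2 y t) (dx u 3 y t) (dx u 4 y t)) x"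
  unfolding dt_def
  using DERIV_imp_deriv[OF has_real_derivative_cube_t[OF u(1)]]
    DERIV_imp_deriv[OF has_real_derivative_cube_flux[OF u \<beta> q2]]
  by simp

lemma integrable_cube_if_rapid_decay:
  assumes "smooth2 u" "rapid_decay u"
  shows "integrable lborel (\<lambda>y. (u y t) ^ 3)"
proof -
  obtain A where A: "\<And>x. \<bar>u x t\<bar> \<le> A"
    using rapid_decay_uniform_bound[OF assms(2), of 0 t t 0] by fastforce
  obtain B where B: "\<And>x. x\<^sup>2 * \<bar>u x t\<bar> \<le> B"
    using rapid_decay_uniform_bound[OF assms(2), of 0 t t 2] by fastforce
  have "isCont (\<lambda>y. u y t) x" for x
    using DERIV_isCont[OF has_real_derivative_dx[OF assms(1), of 0 t x]] by simp
  then have "continuous_on UNIV (\<lambda>y. (u y t) ^ 3)"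
    by (intro continuous_intros continuous_at_imp_continuous_on) auto
  moreover have "\<bar>(u x t) ^ 3\<bar> \<le> A ^ 3" for x
    using power_mono[OF A[of x] abs_ge_zero, of 3] by (simp add: power_abs)
  moreover have "x\<^sup>2 * \<bar>(u x t) ^ 3\<bar> \<le> B * A\<^sup>2" for x
  proof -
    have "x\<^sup>2 * \<bar>(u x t) ^ 3\<bar> = (x\<^sup>2 * \<bar>u x t\<bar>) * \<bar>u x t\<bar>\<^sup>2"
      by (simp add: abs_mult power2_eq_square power3_eq_cube)
    also have "\<dots> \<le> B * A\<^sup>2"
      using A[of x] B[of x] B[of 0] by (intro mult_mono power_mono) auto
    finally show ?thesis .
  qed
  ultimately show ?thesis
    by (rule integrable_lborel_if_decay)
qed

lemma integral_cube_conserved: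
  assumes u: "smooth2 u" "solves_eq p1 p3 \<beta> q0 q1 q2 u" "rapid_decay u"
    and \<beta>: "p3 = 0 \<or> \<beta> = 1" and q2: "q2 = 5 * (q1 - 3 * q0)"
    and "t1 \<le> t2"
  shows "(LBINT x. (u x t1) ^ 3) = (LBINT x. (u x t2) ^ 3)"
proof -
  obtain M where M: "\<And>k x t. k \<le> 4 \<Longrightarrow> t \<in> {t1..t2} \<Longrightarrow> \<bar>dx u k x t\<bar> \<le> M"
    using rapid_decay_uniform_bound[OF u(3), of 4 t1 t2 0] by fastforce
  obtain D where D: "\<And>k x t. k \<le> 1 \<Longrightarrow> t \<in> {t1..t2} \<Longrightarrow> \<bar>x * dx u k x t\<bar> \<le> D"
    using rapid_decay_uniform_bound[OF u(3), of 1 t1 t2 1] by (fastforce simp: abs_mult)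
  have cont_E: "continuous_on UNIV (\<lambda>z. 3 * (u (fst z) (snd z))\<^sup>2 * dt u (fst z) (snd z))"
    using smooth2_continuous_on[OF u(1)] smooth2_continuous_on[OF smooth2_dt[OF u(1)]]
    by (intro continuous_intros)
  show ?thesis
  proof (rule integral_conserved_if_flux_decays[OF has_real_derivative_cube_t[OF u(1)]
        has_real_derivative_cube_flux[OF u(1,2) \<beta> q2] cont_E integrable_cube_if_rapid_decay[OF u(1,3)]
        abs_weighted_cube_flux_le \<open>t1 \<le> t2\<close>])
  qed (use M[of 0] D[of 0] M D in auto)
qed

theorem mainTheorem10:
  fixes p1 p3 \<beta> q0 q1 q2 :: real
  assumes "p3 = 0 \<or> \<beta> = 1"
    and "q2 = 5 * (q1 - 3 * q0)"
  shows "(\<exists>F. poly5 F \<and>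
           (\<forall>u. smooth2 u \<and> solves_eq p1 p3 \<beta> q0 q1 q2 u \<longrightarrow>
              (\<forall>x t. dt (\<lambda>y s. (u y s) ^ 3) x t =
                 deriv (\<lambda>y. F (u y t) (dx u 1 y t) (dx u 2 y t) (dx u 3 y t) (dx u 4 y t)) x)))
       \<and> (\<forall>u. smooth2 u \<and> solves_eq p1 p3 \<beta> q0 q1 q2 u \<and> rapid_decay u \<longrightarrow>
              (\<forall>t1 t2. (LBINT x. (u x t1) ^ 3) = (LBINT x. (u x t2) ^ 3)))"
proof (intro conjI allI impI exI[of _ "cube_flux p1 p3 q0 q1"] poly5_cube_flux)
  show "dt (\<lambda>y s. (u y s) ^ 3) x t =
      deriv (\<lambda>y. cube_flux p1 p3 q0 q1 (u y t) (dx u 1 y t) (dx u 2 y t) (dx u 3 y t) (dx u 4 y t)) x"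
    if "smooth2 u \<and> solves_eq p1 p3 \<beta> q0 q1 q2 u" for u x t
    using that cube_local_conservation_law[OF _ _ assms] by blast
  show "(LBINT x. (u x t1) ^ 3) = (LBINT x. (u x t2) ^ 3)"
    if "smooth2 u \<and> solves_eq p1 p3 \<beta> q0 q1 q2 u \<and> rapid_decay u" for u t1 t2
    using that integral_cube_conserved[OF _ _ _ assms] nle_le by metis
qed

end
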